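(* Consider the $n$-body problem in ${\bf S}^2$ with all masses equal. If $n$ is odd, the configuration in which the bodies are placed at the vertices of a regular $n$-gon inscribed in any great circle of ${\bf S}^2$ is a fixed point of the equations of motion. For $n=4$, the configuration in which the bodies are at the vertices of a regular tetrahedron inscribed in ${\bf S}^2$ (e.g. $(0,0,1)$, $(0,2\sqrt2/3,-1/3)$, $(-2/\sqrt6,-\sqrt2/3,-1/3)$, $(2/\sqrt6,-\sqrt2/3,-1/3)$) is also a fixed point.
   Context: The $n$-body problem in ${\bf S}^2$: bodies of masses $m_1,\dots,m_n>0$ have positions ${\bf q}_i=(x_i,y_i,z_i)\in\mathbb R^3$ on the unit sphere ${\bf S}^2=\{{\bf q}:{\bf q}\cdot{\bf q}=1\}$ ($\cdot$ the Euclidean inner product), and satisfy $$\ddot{\bf q}_i=\sum_{j\ne i}\frac{m_j[{\bf q}_j-({\bf q}_i\cdot{\bf q}_j){\bf q}_i]}{[1-({\bf q}_i\cdot{\bf q}_j)^2]^{3/2}}-(\dot{\bf q}_i\cdot\dot{\bf q}_i){\bf q}_i,\qquad {\bf q}_i\cdot{\bf q}_i=1,\ \ {\bf q}_i\cdot\dot{\bf q}_i=0,$$ $i=1,\dots,n$, defined only for configurations with $({\bf q}_i\cdot{\bf q}_j)^2\ne 1$ for all $i\ne j$. A fixed point is a configuration ${\bf q}^0$ (satisfying this nonsingularity condition) such that the constant function ${\bf q}(t)\equiv{\bf q}^0$ solves the equations, equivalently $\sum_{j\ne i}m_j[{\bf q}_j-({\bf q}_i\cdot{\bf q}_j){\bf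 q}_i]/[1-({\bf q}_i\cdot{\bf q}_j)^2]^{3/2}=0$ for every $i$. *)

theory Defs
  imports "HOL-Analysis.Analysis"
begin

text \<open>Configurations of n bodies on the unit sphere S^2 in R^3: positions q i, i < n,
  masses m i. The right-hand side of the equations of motion at zero velocity.\<close>

definition on_sphere :: "nat \<Rightarrow> (nat \<Rightarrow> real^3) \<Rightarrow> bool" where
  "on_sphere n q \<longleftrightarrow> (\<forall>i<n. q i \<bullet> q i = 1)"

definition nonsingular :: "nat \<Rightarrow> (nat \<Rightarrow> real^3) \<Rightarrow> bool" where
  "nonsingular n q \<longleftrightarrow> (\<forall>i<n. \<forall>j<n. i \<noteq> j \<longrightarrow> (q i \<bullet> q j)^2 \<noteq> 1)"

definition force :: "(nat \<Rightarrow> real) \<Rightarrow> nat \<Rightarrow> (nat \<Rightarrow> real^3) \<Rightarrow> nat \<Rightarrow> real^3" where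
  "force m n q i = (\<Sum>j\<in>{..<n} - {i}.
      (m j / (1 - (q i \<bullet> q j)^2) powr (3/2)) *\<^sub>R (q j - (q i \<bullet> q j) *\<^sub>R q i))"

definition fixed_point :: "(nat \<Rightarrow> real) \<Rightarrow> nat \<Rightarrow> (nat \<Rightarrow> real^3) \<Rightarrow> bool" where
  "fixed_point m n q \<longleftrightarrow> on_sphere n q \<and> nonsingular n q \<and> (\<forall>i<n. force m n q i = 0)"

end

theory Submission
  imports Defs
begin

(* Writing the bodies as
   q k = cos(theta k) u + sin(theta k) v with theta k = 2 pi k / n + phi, the pull of body j
   on body i is F(j - i) times the unit tangent at q i, where F is an n-periodic odd
   function.  Summing F over a full period starting anywhere gives the same value, and
   pairing x with -x shows this value is 0.  Oddness of n is used only for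
   nonsingularity: it excludes antipodal pairs, i.e. sin(2 pi (j - i) / n) = 0.

   For an equiangular configuration (all q i . q j equal to c) with
   equal masses the force on body i is a multiple of (sum of all q j) - (1 + (n-1) c) q i.
   For four equidistant points on the sphere a Gram-determinant argument shows that the
   barycentre vanishes, hence c = -1/3, and both terms are zero. *)

lemma periodic_sum_shift_one:
  fixes F :: "real \<Rightarrow> real" and n :: nat
  assumes per: "\<And>x. F (x + real n) = F x" and n: "n > 0"
  shows "(\<Sum>j<n. F (real j + 1)) = (\<Sum>j<n. F (real j))"
proof -
  obtain m where m: "n = Suc m" using n by (cases n) auto
  have "(\<Sum>j<n. F (real j + 1)) = (\<Sum>j<m. F (real j + 1)) + F (real m + 1)"
    by (simp add: m)
  also have "F (real m + 1) = F 0" using per[of 0] m by (simp add: add.commute)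
  also have "(\<Sum>j<n. F (real j)) = F 0 + (\<Sum>j<m. F (real (Suc j)))"
    unfolding m using sum.lessThan_Suc_shift[of "\<lambda>j. F (real j)" m] by simp
  ultimately show ?thesis by (simp add: add.commute)
qed

lemma periodic_sum_shift:
  fixes F :: "real \<Rightarrow> real" and n i :: nat
  assumes per: "\<And>x. F (x + real n) = F x" and n: "n > 0"
  shows "(\<Sum>j<n. F (real j - real i)) = (\<Sum>j<n. F (real j))"
proof (induction i)
  case 0
  then show ?case by simp
next
  case (Suc i)
  let ?G = "\<lambda>x. F (x - real (Suc i))"
  have "(\<Sum>j<n. ?G (real j + 1)) = (\<Sum>j<n. ?G (real j))"
  proof (rule periodic_sum_shift_one)
    show "?G (x + real n) = ?G x" for x
      using per[of "x - real (Suc i)"] by (simp add: algebra_simps)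
  qed (rule n)
  then show ?case using Suc by (simp add: algebra_simps)
qed

text \<open>An odd periodic function sums to zero over a full period: the reindexing
  j \<mapsto> n - 1 - j turns the sum into minus its shift by one.\<close>
lemma odd_periodic_sum_zero:
  fixes F :: "real \<Rightarrow> real" and n :: nat
  assumes per: "\<And>x. F (x + real n) = F x" and odd: "\<And>x. F (-x) = - F x" and n: "n > 0"
  shows "(\<Sum>j<n. F (real j)) = 0"
proof -
  have "(\<Sum>j<n. F (real j)) = (\<Sum>j<n. F (real (n - Suc j)))"
    by (rule sum.nat_diff_reindex[symmetric])
  also have "\<dots> = (\<Sum>j<n. - F (real j + 1))"
  proof (rule sum.cong)
    fix j assume "j \<in> {..<n}"
    hence "real (n - Suc j) = - (real j + 1) + real n" by (simp add: of_nat_diff)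
    hence "F (real (n - Suc j)) = F (- (real j + 1))" by (simp only: per)
    thus "F (real (n - Suc j)) = - F (real j + 1)" by (simp only: odd)
  qed simp
  also have "\<dots> = - (\<Sum>j<n. F (real j))"
    using periodic_sum_shift_one[of F n, OF per n] by (simp add: sum_negf)
  finally show ?thesis by simp
qed

definition circle_point :: "real^3 \<Rightarrow> real^3 \<Rightarrow> real \<Rightarrow> real^3" where
  "circle_point u v \<theta> = cos \<theta> *\<^sub>R u + sin \<theta> *\<^sub>R v"

lemma circle_point_inner:
  assumes "u \<bullet> u = 1" "v \<bullet> v = 1" "u \<bullet> v = 0"
  shows "circle_point u v a \<bullet> circle_point u v b = cos (b - a)"
  using assms
  by (simp add: circle_point_def inner_add_left inner_add_right inner_commute cos_diff
      algebra_simps)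

text \<open>The component of circle_point b orthogonal to circle_point a points along the unit
  tangent at a, which is the point a quarter turn further.\<close>
lemma circle_point_tangent_component:
  "circle_point u v b - cos (b - a) *\<^sub>R circle_point u v a
     = sin (b - a) *\<^sub>R circle_point u v (a + pi / 2)"
proof -
  define \<alpha> where "\<alpha> = b - a"
  have "b = a + \<alpha>" by (simp add: \<alpha>_def)
  then show ?thesis
    unfolding circle_point_def \<alpha>_def[symmetric] by (simp add: cos_add sin_add algebra_simps)
qed

lemma odd_polygon_sin_nonzero:
  fixes n i j :: nat
  assumes odd: "odd n" and ij: "i < n" "j < n" "i \<noteq> j"
  shows "sin (2 * pi * (real j - real i) / real n) \<noteq> 0"
proof
  assume "sin (2 * pi * (real j - real i) / real n) = 0"
  then obtain k :: int where "2 * pi * (real j - real i) / real n = real_of_int k * pi"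
    by (auto simp: sin_zero_iff_int2)
  hence "pi * (2 * (real j - real i)) = pi * (real_of_int k * real n)"
    using ij by (simp add: field_simps)
  hence "2 * (real j - real i) = real_of_int k * real n" by simp
  hence eq: "2 * (int j - int i) = k * int n"
    by (metis (mono_tags, opaque_lifting) of_int_eq_iff of_int_diff of_int_mult
        of_int_numeral of_int_of_nat_eq)
  have "int n dvd 2 * (int j - int i)" unfolding eq by simp
  moreover have "coprime (int n) 2" using odd by (simp add: coprime_commute)
  ultimately have "int n dvd (int j - int i)" using coprime_dvd_mult_right_iff by blast
  moreover have "int j - int i \<noteq> 0" using ij by simp
  ultimately have "\<bar>int n\<bar> \<le> \<bar>int j - int i\<bar>" by (rule dvd_imp_le_int[rotated])
  thus False using ij by simp
qed

text \<open>With equal masses the vertices of a regular n-gon on a great circle exert no net force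
  on each other, for every n > 0: the force on vertex i is a full-period sum of an odd
  n-periodic function times the tangent at vertex i.\<close>
lemma regular_polygon_force_zero:
  fixes u v :: "real^3" and n i :: nat and \<phi> \<mu> :: real
  assumes orth: "u \<bullet> u = 1" "v \<bullet> v = 1" "u \<bullet> v = 0" and n: "n > 0" and i: "i < n"
  defines "\<theta> \<equiv> \<lambda>k. 2 * pi * real k / real n + \<phi>"
  shows "force (\<lambda>_. \<mu>) n (\<lambda>k. circle_point u v (\<theta> k)) i = 0"
proof -
  define F where "F x = \<mu> / (1 - (cos (2 * pi * x / real n))^2) powr (3/2)
                           * sin (2 * pi * x / real n)" for x
  have per: "F (x + real n) = F x" for x
  proof -
    have "2 * pi * (x + real n) / real n = 2 * pi * x / real n + 2 * pi"
      using n by (simp add: field_simps)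
    thus ?thesis unfolding F_def by simp
  qed
  have odd: "F (- x) = - F x" for x unfolding F_def by simp
  have angle: "\<theta> j - \<theta> i = 2 * pi * (real j - real i) / real n" for j
    by (simp add: \<theta>_def diff_divide_distrib right_diff_distrib)
  let ?q = "\<lambda>k. circle_point u v (\<theta> k)"
  let ?t = "circle_point u v (\<theta> i + pi / 2)"
  have "force (\<lambda>_. \<mu>) n ?q i = (\<Sum>j\<in>{..<n} - {i}. F (real j - real i) *\<^sub>R ?t)"
    unfolding force_def
  proof (rule sum.cong)
    fix j
    show "(\<mu> / (1 - (?q i \<bullet> ?q j)^2) powr (3/2)) *\<^sub>R (?q j - (?q i \<bullet> ?q j) *\<^sub>R ?q i)
        = F (real j - real i) *\<^sub>R ?t"
      unfolding circle_point_inner[OF orth] circle_point_tangent_component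
      by (simp add: angle F_def)
  qed simp
  also have "\<dots> = (\<Sum>j<n. F (real j - real i)) *\<^sub>R ?t"
    using i by (simp add: scaleR_sum_left sum.remove[of "{..<n}" i] F_def)
  also have "(\<Sum>j<n. F (real j - real i)) = 0"
    using periodic_sum_shift[of F n i, OF per n] odd_periodic_sum_zero[OF per odd n] by simp
  finally show ?thesis by simp
qed

lemma odd_regular_polygon_fixed_point:
  fixes u v :: "real^3" and n :: nat and \<phi> \<mu> :: real
  assumes odd: "odd n" and orth: "u \<bullet> u = 1" "v \<bullet> v = 1" "u \<bullet> v = 0"
  shows "fixed_point (\<lambda>_. \<mu>) n
      (\<lambda>k. cos (2 * pi * real k / real n + \<phi>) *\<^sub>R u + sin (2 * pi * real k / real n + \<phi>) *\<^sub>R v)"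
proof -
  define \<theta> where "\<theta> k = 2 * pi * real k / real n + \<phi>" for k
  let ?q = "\<lambda>k. circle_point u v (\<theta> k)"
  have n: "n > 0" using odd by (cases n) auto
  have "on_sphere n ?q"
    unfolding on_sphere_def by (simp add: circle_point_inner[OF orth])
  moreover have "nonsingular n ?q"
    unfolding nonsingular_def
  proof (intro allI impI)
    fix i j assume ij: "i < n" "j < n" "i \<noteq> j"
    have "\<theta> j - \<theta> i = 2 * pi * (real j - real i) / real n"
      by (simp add: \<theta>_def diff_divide_distrib right_diff_distrib)
    hence "sin (\<theta> j - \<theta> i) \<noteq> 0" using odd_polygon_sin_nonzero[OF odd ij] by simp
    hence "(cos (\<theta> j - \<theta> i))^2 \<noteq> 1"
      using sin_cos_squared_add[of "\<theta> j - \<theta> i"] by (metis add_cancel_right_left zero_eq_power2)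
    thus "(?q i \<bullet> ?q j)^2 \<noteq> 1" by (simp add: circle_point_inner[OF orth])
  qed
  moreover have "\<forall>i<n. force (\<lambda>_. \<mu>) n ?q i = 0"
    using regular_polygon_force_zero[OF orth n] unfolding \<theta>_def by blast
  ultimately show ?thesis by (simp add: fixed_point_def circle_point_def \<theta>_def)
qed

lemma equiangular_force:
  fixes q :: "nat \<Rightarrow> real^3" and n i :: nat and c \<mu> :: real
  assumes i: "i < n" and dot: "\<And>j. j < n \<Longrightarrow> j \<noteq> i \<Longrightarrow> q i \<bullet> q j = c"
  shows "force (\<lambda>_. \<mu>) n q i
       = (\<mu> / (1 - c^2) powr (3/2)) *\<^sub>R ((\<Sum>j<n. q j) - (1 + real (n - 1) * c) *\<^sub>R q i)"
proof -
  let ?K = "\<mu> / (1 - c^2) powr (3/2)"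
  have "force (\<lambda>_. \<mu>) n q i = ?K *\<^sub>R (\<Sum>j\<in>{..<n} - {i}. q j - c *\<^sub>R q i)"
    unfolding force_def scaleR_sum_right by (rule sum.cong) (auto simp: dot)
  also have "(\<Sum>j\<in>{..<n} - {i}. q j - c *\<^sub>R q i)
      = (\<Sum>j<n. q j) - q i - real (n - 1) *\<^sub>R c *\<^sub>R q i"
  proof -
    have "card ({..<n} - {i}) = n - 1" using i by simp
    hence "(\<Sum>j\<in>{..<n} - {i}. c *\<^sub>R q i) = real (n - 1) *\<^sub>R c *\<^sub>R q i"
      by (simp only: sum_constant_scaleR)
    moreover have "(\<Sum>j<n. q j) = q i + (\<Sum>j\<in>{..<n} - {i}. q j)"
      using i by (simp add: sum.remove[of "{..<n}" i])
    ultimately show ?thesis by (simp add: sum_subtractf)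
  qed
  finally show ?thesis by (simp add: scaleR_add_left diff_diff_eq)
qed

text \<open>A vector orthogonal to three vectors of equal length D^(1/2) with pairwise inner
  products D/2 (the Gram matrix is D/2 (I + J), of determinant D^3/2) must vanish.\<close>
lemma orthogonal_to_equilateral_triple:
  fixes a b e s :: "real^3" and D :: real
  assumes "D \<noteq> 0" "a \<bullet> a = D" "b \<bullet> b = D" "e \<bullet> e = D"
    "a \<bullet> b = D/2" "a \<bullet> e = D/2" "b \<bullet> e = D/2"
    "a \<bullet> s = 0" "b \<bullet> s = 0" "e \<bullet> s = 0"
  shows "s = 0"
proof -
  define M :: "real^3^3" where "M = vector [a, b, e]"
  have rows: "M$1 = a" "M$2 = b" "M$3 = e" by (simp_all add: M_def)
  have gram: "(M ** transpose M) $ i $ j = M$i \<bullet> M$j" for i j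
    by (simp add: matrix_matrix_mult_def transpose_def inner_vec_def mult.commute)
  have "det (M ** transpose M) = D^3/2"
    unfolding det_3 gram rows
    by (simp add: inner_commute assms, simp add: power3_eq_cube field_simps)
  hence "det M * det M = D^3/2" by (simp add: det_mul det_transpose)
  hence "det M * det M \<noteq> 0"
    using assms(1) by (metis divide_eq_0_iff power_not_zero zero_neq_numeral)
  hence "invertible M" by (simp add: invertible_det_nz)
  hence ker: "M *v x = 0 \<Longrightarrow> x = 0" for x
    unfolding invertible_def using matrix_left_invertible_ker by blast
  have "(M *v s) $ k = M$k \<bullet> s" for k
    by (simp add: matrix_vector_mult_def inner_vec_def)
  hence "M *v s = 0"
    unfolding vec_eq_iff by (simp add: forall_3 rows assms)
  thus ?thesis by (rule ker)
qed

lemma equidistant_four_on_sphere: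
  fixes q :: "nat \<Rightarrow> real^3" and d :: real
  assumes d: "d > 0" and sph: "on_sphere 4 q"
    and dist: "\<forall>i<4. \<forall>j<4. i \<noteq> j \<longrightarrow> dist (q i) (q j) = d"
  shows "(\<Sum>j<4. q j) = 0" and "\<And>i j. i < 4 \<Longrightarrow> j < 4 \<Longrightarrow> i \<noteq> j \<Longrightarrow> q i \<bullet> q j = -1/3"
proof -
  define c where "c = 1 - d^2/2"
  have one: "q i \<bullet> q i = 1" if "i < 4" for i using sph that by (simp add: on_sphere_def)
  have dot: "q i \<bullet> q j = c" if ij: "i < 4" "j < 4" "i \<noteq> j" for i j
  proof -
    have "d^2 = (q i - q j) \<bullet> (q i - q j)"
      using dist ij by (simp add: dist_norm dot_square_norm)
    also have "\<dots> = q i \<bullet> q i + q j \<bullet> q j - 2 * (q i \<bullet> q j)"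
      by (simp add: inner_diff_left inner_diff_right inner_commute)
    finally show ?thesis using one ij unfolding c_def by (simp add: field_simps)
  qed
  define s where "s = (\<Sum>j<4. q j)"
  have s_expand: "s = q 0 + q 1 + q 2 + q 3"
    by (simp add: s_def numeral_eq_Suc add.commute add.left_commute)
  have s_dot: "q k \<bullet> s = 1 + 3*c" if "k < 4" for k
  proof -
    have "k = 0 \<or> k = 1 \<or> k = 2 \<or> k = 3" using that by auto
    thus ?thesis unfolding s_expand
      by (elim disjE) (simp_all add: inner_add_right one dot)
  qed
  have s_dot': "s \<bullet> q k = 1 + 3*c" if "k < 4" for k
    using s_dot[OF that] by (simp add: inner_commute)
  text \<open>The edges from q 0 form an equilateral triple, and s is orthogonal to each of them.\<close>
  have s0: "s = 0"
    by (rule orthogonal_to_equilateral_triple[where a="q 1 - q 0" and b="q 2 - q 0"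
          and e="q 3 - q 0" and D="d^2"])
      (use d in \<open>simp_all add: inner_diff_left inner_diff_right one dot s_dot s_dot' c_def\<close>)
  then show "(\<Sum>j<4. q j) = 0" by (simp add: s_def)
  have "c = -1/3" using s_dot[of 0] s0 by simp
  then show "q i \<bullet> q j = -1/3" if "i < 4" "j < 4" "i \<noteq> j" for i j
    using dot[OF that] by simp
qed

lemma regular_tetrahedron_fixed_point:
  fixes q :: "nat \<Rightarrow> real^3" and d \<mu> :: real
  assumes d: "d > 0" and sph: "on_sphere 4 q"
    and dist: "\<forall>i<4. \<forall>j<4. i \<noteq> j \<longrightarrow> dist (q i) (q j) = d"
  shows "fixed_point (\<lambda>_. \<mu>) 4 q"
proof -
  note centred = equidistant_four_on_sphere[OF d sph dist]
  have "nonsingular 4 q"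
    unfolding nonsingular_def using centred(2) by (simp add: power2_eq_square)
  moreover have "force (\<lambda>_. \<mu>) 4 q i = 0" if i: "i < 4" for i
    using equiangular_force[of i 4 q "-1/3" \<mu>] centred i by simp
  ultimately show ?thesis unfolding fixed_point_def using sph by blast
qed

theorem mainTheorem3:
  fixes \<mu> :: real
  assumes "\<mu> > 0"
  shows "(\<forall>(n::nat) (u::real^3) v \<phi>. odd n \<longrightarrow> u \<bullet> u = 1 \<longrightarrow> v \<bullet> v = 1 \<longrightarrow> u \<bullet> v = 0 \<longrightarrow>
            fixed_point (\<lambda>_. \<mu>) n
              (\<lambda>k. cos (2 * pi * real k / real n + \<phi>) *\<^sub>R u + sin (2 * pi * real k / real n + \<phi>) *\<^sub>R v))
       \<and> (\<forall>(q::nat \<Rightarrow> real^3) d. d > 0 \<longrightarrow> on_sphere 4 q \<longrightarrow>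
            (\<forall>i<4. \<forall>j<4. i \<noteq> j \<longrightarrow> dist (q i) (q j) = d) \<longrightarrow>
            fixed_point (\<lambda>_. \<mu>) 4 q)"
  using odd_regular_polygon_fixed_point regular_tetrahedron_fixed_point by blast

end
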